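(* For every $d\ge1$, $$G_{\mathbb C}.(\Xi_+\times\Xi_+)=\{(z,w)\in\mathrm{dS}^d_{\mathbb C}\times\mathrm{dS}^d_{\mathbb C}\;:\;\beta(z,\overline w)\notin(-\infty,-1]\},$$ where $G_{\mathbb C}$ acts on pairs by $g.(z,w)=(gz,\overline g\,w)$.
   Context: Let $d\ge1$. On $\mathbb C^{1+d}$ let $\beta(z,w)=z_0w_0-z_1w_1-\dots-z_dw_d$, let $\overline z$ denote coordinatewise complex conjugation, $V=\mathbb R^{1+d}$, $V_+=\{x\in V:x_0>0,\beta(x,x)>0\}$, $\mathrm{dS}^d_{\mathbb C}=\{z:\beta(z,z)=-1\}$, $\Xi_+=\mathrm{dS}^d_{\mathbb C}\cap(V+iV_+)$. Let $G_{\mathbb C}=\mathrm{SO}_{1+d}(\mathbb C)$ be the determinant-one complex linear maps preserving $\beta$, and for $g\in G_{\mathbb C}$ let $\overline g$ be its entrywise complex conjugate (again in $G_{\mathbb C}$). *)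

theory Defs
  imports Complex_Main "Jordan_Normal_Form.Determinant"
begin

definition lbeta :: "nat \<Rightarrow> 'a::comm_ring_1 vec \<Rightarrow> 'a vec \<Rightarrow> 'a" where
  "lbeta d z w = z $ 0 * w $ 0 - (\<Sum>i\<in>{1..d}. z $ i * w $ i)"

definition cconj_vec :: "complex vec \<Rightarrow> complex vec" where
  "cconj_vec z = map_vec cnj z"

definition cconj_mat :: "complex mat \<Rightarrow> complex mat" where
  "cconj_mat g = map_mat cnj g"

definition Vplus :: "nat \<Rightarrow> real vec set" where
  "Vplus d = {x \<in> carrier_vec (Suc d). x $ 0 > 0 \<and> lbeta d x x > 0}"

definition dS_C :: "nat \<Rightarrow> complex vec set" where
  "dS_C d = {z \<in> carrier_vec (Suc d). lbeta d z z = -1}"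

definition Xi_plus :: "nat \<Rightarrow> complex vec set" where
  "Xi_plus d = {z \<in> dS_C d. map_vec Im z \<in> Vplus d}"

definition G_C :: "nat \<Rightarrow> complex mat set" where
  "G_C d = {g \<in> carrier_mat (Suc d) (Suc d). det g = 1 \<and>
     (\<forall>z \<in> carrier_vec (Suc d). \<forall>w \<in> carrier_vec (Suc d).
        lbeta d (g *\<^sub>v z) (g *\<^sub>v w) = lbeta d z w)}"

end

theory Submission
  imports Defs "HOL-Analysis.Convex"
begin

text \<open>For \<open>g \<in> G\<^sub>\<complex>\<close> one has \<open>\<beta>(g z, conj (conj g w)) = \<beta>(z, conj w)\<close>, so the inclusion \<open>\<subseteq>\<close>
  reduces to \<open>z, w \<in> \<Xi>\<^sub>+\<close>; there \<open>z - conj w\<close> has timelike imaginary part \<open>Im z + Im w\<close>, and a reverse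
  Cauchy--Schwarz argument excludes \<open>\<beta>(z, conj w) \<le> -1\<close>. Conversely, let \<open>c = \<beta>(z, conj w) \<notin> (-\<infinity>, -1]\<close>.
  If \<open>c \<noteq> 1\<close>, a root \<open>s\<close> of \<open>-(s\<^sup>2 + s\<^sup>-\<^sup>2)/2 = c\<close> in the upper half-plane gives light-cone vectors
  \<open>z' \<in> \<Xi>\<^sub>+\<close> and \<open>w' \<in> conj \<Xi>\<^sub>+\<close> with the same Gram matrix as \<open>(z, conj w)\<close>, and Witt's theorem, realised
  by reflections, moves \<open>(z, conj w)\<close> onto \<open>(z', w')\<close>. For \<open>c = 1\<close> the pair spans a degenerate plane and
  is normalised by hand. Composing with the reflection \<open>x\<^sub>1 \<mapsto> -x\<^sub>1\<close>, which preserves \<open>\<Xi>\<^sub>+\<close>, makes the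
  determinant 1.\<close>

definition lorentz_sign :: "nat \<Rightarrow> 'a::comm_ring_1" where
  "lorentz_sign k = (if k = 0 then 1 else -1)"

lemma lbeta_conv_sum: "lbeta d x y = (\<Sum>k<Suc d. lorentz_sign k * (x $ k * y $ k))"
  unfolding lbeta_def sum.lessThan_Suc_shift
  by (simp add: sum.atLeast1_atMost_eq lorentz_sign_def sum_negf)

lemma lbeta_sym: "lbeta d x y = lbeta d y x"
  unfolding lbeta_def by (simp add: mult.commute)

lemma lbeta_add_left:
  "x \<in> carrier_vec (Suc d) \<Longrightarrow> y \<in> carrier_vec (Suc d) \<Longrightarrow> lbeta d (x + y) z = lbeta d x z + lbeta d y z"
  by (simp add: lbeta_conv_sum algebra_simps sum.distrib)

lemma lbeta_diff_left:
  "x \<in> carrier_vec (Suc d) \<Longrightarrow> y \<in> carrier_vec (Suc d) \<Longrightarrow> lbeta d (x - y) z = lbeta d x z - lbeta d y z"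
  by (simp add: lbeta_conv_sum algebra_simps sum_subtractf)

lemma lbeta_smult_left: "x \<in> carrier_vec (Suc d) \<Longrightarrow> lbeta d (a \<cdot>\<^sub>v x) z = a * lbeta d x z"
  by (simp add: lbeta_conv_sum algebra_simps sum_distrib_left)

lemma lbeta_add_right:
  "x \<in> carrier_vec (Suc d) \<Longrightarrow> y \<in> carrier_vec (Suc d) \<Longrightarrow> lbeta d z (x + y) = lbeta d z x + lbeta d z y"
  by (metis lbeta_add_left lbeta_sym)

lemma lbeta_diff_right:
  "x \<in> carrier_vec (Suc d) \<Longrightarrow> y \<in> carrier_vec (Suc d) \<Longrightarrow> lbeta d z (x - y) = lbeta d z x - lbeta d z y"
  by (metis lbeta_diff_left lbeta_sym)

lemma lbeta_smult_right: "x \<in> carrier_vec (Suc d) \<Longrightarrow> lbeta d z (a \<cdot>\<^sub>v x) = a * lbeta d z x"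
  by (metis lbeta_smult_left lbeta_sym)

lemma lbeta_diff_self:
  "x \<in> carrier_vec (Suc d) \<Longrightarrow> y \<in> carrier_vec (Suc d) \<Longrightarrow>
    lbeta d (x - y) (x - y) = lbeta d x x - 2 * lbeta d x y + lbeta d y y"
  by (simp add: lbeta_diff_left lbeta_diff_right lbeta_sym[of d y x])

lemma lbeta_plane:
  assumes "d \<ge> 1" and "\<forall>k\<in>{2..d}. y $ k = 0"
  shows "lbeta d x y = x $ 0 * y $ 0 - x $ 1 * y $ 1"
proof -
  have "{1..d} = insert 1 {2..d}" using assms(1) by auto
  then show ?thesis using assms(2) by (simp add: lbeta_def)
qed

definition isometries :: "nat \<Rightarrow> complex mat set" where
  "isometries d = {M \<in> carrier_mat (Suc d) (Suc d). \<forall>x \<in> carrier_vec (Suc d). \<forall>y \<in> carrier_vec (Suc d).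
     lbeta d (M *\<^sub>v x) (M *\<^sub>v y) = lbeta d x y}"

lemma G_C_eq: "G_C d = {g \<in> isometries d. det g = 1}"
  by (auto simp: G_C_def isometries_def)

lemma isometriesD:
  assumes "M \<in> isometries d"
  shows "M \<in> carrier_mat (Suc d) (Suc d)"
    and "x \<in> carrier_vec (Suc d) \<Longrightarrow> y \<in> carrier_vec (Suc d) \<Longrightarrow> lbeta d (M *\<^sub>v x) (M *\<^sub>v y) = lbeta d x y"
  using assms by (auto simp: isometries_def)

lemma one_mat_isometries: "1\<^sub>m (Suc d) \<in> isometries d"
  by (simp add: isometries_def)

lemma isometries_mult:
  assumes A: "A \<in> isometries d" and B: "B \<in> isometries d"
  shows "A * B \<in> isometries d"
  unfolding isometries_def
proof (intro CollectI conjI ballI)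
  have Ac: "A \<in> carrier_mat (Suc d) (Suc d)" and Bc: "B \<in> carrier_mat (Suc d) (Suc d)"
    using A B by (simp_all add: isometriesD)
  then show "A * B \<in> carrier_mat (Suc d) (Suc d)" by simp
  fix x y :: "complex vec" assume x: "x \<in> carrier_vec (Suc d)" and y: "y \<in> carrier_vec (Suc d)"
  have "lbeta d ((A * B) *\<^sub>v x) ((A * B) *\<^sub>v y) = lbeta d (A *\<^sub>v (B *\<^sub>v x)) (A *\<^sub>v (B *\<^sub>v y))"
    using Ac Bc x y by (simp add: assoc_mult_mat_vec)
  also have "\<dots> = lbeta d x y"
    using isometriesD(2)[OF A] isometriesD(2)[OF B x y] Bc x y by simp
  finally show "lbeta d ((A * B) *\<^sub>v x) ((A * B) *\<^sub>v y) = lbeta d x y" .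
qed

definition lorentz_mat :: "nat \<Rightarrow> 'a::comm_ring_1 mat" where
  "lorentz_mat d = mat_diag (Suc d) lorentz_sign"

lemma mat_diag_mult_vec:
  assumes "v \<in> carrier_vec n"
  shows "mat_diag n f *\<^sub>v v = vec n (\<lambda>i. f i * v $ i)"
proof (rule eq_vecI)
  fix i assume "i < dim_vec (vec n (\<lambda>i. f i * v $ i))"
  then have "i < n" by simp
  moreover have "(\<Sum>j = 0..<n. (if i = j then f j else 0) * v $ j) = (\<Sum>j = 0..<n. if i = j then f j * v $ j else 0)"
    by (rule sum.cong) auto
  ultimately show "(mat_diag n f *\<^sub>v v) $ i = vec n (\<lambda>i. f i * v $ i) $ i"
    using assms by (simp add: mat_diag_def scalar_prod_def)
qed (simp add: mat_diag_def)

lemma det_mat_diag: "det (mat_diag n f) = (\<Prod>i<n. f i)"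
  by (simp add: det_upper_triangular[of _ n] prod_list_diag_prod upper_triangular_def mat_diag_def
      atLeast0LessThan)

lemma lbeta_conv_scalar_prod:
  "x \<in> carrier_vec (Suc d) \<Longrightarrow> y \<in> carrier_vec (Suc d) \<Longrightarrow> lbeta d x y = x \<bullet> (lorentz_mat d *\<^sub>v y)"
  by (simp add: lorentz_mat_def mat_diag_mult_vec scalar_prod_def lbeta_conv_sum atLeast0LessThan
      mult.left_commute)

lemma col_conv_mult_unit_vec:
  fixes A :: "'a::semiring_1 mat"
  assumes "A \<in> carrier_mat nr n" "j < n"
  shows "col A j = A *\<^sub>v unit_vec n j"
  using assms by (intro eq_vecI) auto

lemma isometry_gram:
  assumes M: "M \<in> isometries d"
  shows "transpose_mat M * (lorentz_mat d * M) = lorentz_mat d"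
proof -
  let ?J = "lorentz_mat d :: complex mat" and ?e = "unit_vec (Suc d)"
  have Mc: "M \<in> carrier_mat (Suc d) (Suc d)" using M by (rule isometriesD)
  have Jc: "?J \<in> carrier_mat (Suc d) (Suc d)" by (simp add: lorentz_mat_def)
  have "(transpose_mat M * (?J * M)) $$ (i, j) = ?J $$ (i, j)" if "i < Suc d" "j < Suc d" for i j
  proof -
    have "(transpose_mat M * (?J * M)) $$ (i, j) = (M *\<^sub>v ?e i) \<bullet> (?J *\<^sub>v (M *\<^sub>v ?e j))"
      using that Mc Jc
      by (simp add: col_conv_mult_unit_vec[OF Mc] mult_mat_vec_def[of "lorentz_mat d"])
    also have "\<dots> = lbeta d (M *\<^sub>v ?e i) (M *\<^sub>v ?e j)"
      using Mc by (simp add: lbeta_conv_scalar_prod)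
    also have "\<dots> = lbeta d (?e i) (?e j)"
      using isometriesD(2)[OF M] by simp
    also have "\<dots> = ?J $$ (i, j)"
      using that Jc by (simp add: lbeta_conv_scalar_prod)
    finally show ?thesis .
  qed
  then show ?thesis using Mc Jc by (intro eq_matI) auto
qed

lemma det_isometry:
  assumes M: "M \<in> isometries d"
  shows "det M = 1 \<or> det M = -1"
proof -
  let ?J = "lorentz_mat d :: complex mat"
  have Mc: "M \<in> carrier_mat (Suc d) (Suc d)" using M by (rule isometriesD)
  have Jc: "?J \<in> carrier_mat (Suc d) (Suc d)" by (simp add: lorentz_mat_def)
  have "det ?J \<noteq> 0" by (simp add: lorentz_mat_def det_mat_diag lorentz_sign_def)
  moreover have "det M * (det ?J * det M) = det ?J"
    using arg_cong[OF isometry_gram[OF M], of det] Mc Jc by (simp add: det_mult det_transpose)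
  ultimately have "(det M - 1) * (det M + 1) = 0" by (simp add: algebra_simps)
  then show ?thesis by (simp add: eq_neg_iff_add_eq_0)
qed

lemma isometry_inverse_in_G_C:
  assumes M: "M \<in> isometries d" and det: "det M = 1"
  obtains g where "g \<in> G_C d" "\<And>x. x \<in> carrier_vec (Suc d) \<Longrightarrow> g *\<^sub>v (M *\<^sub>v x) = x"
proof -
  have Mc: "M \<in> carrier_mat (Suc d) (Suc d)" using M by (rule isometriesD)
  have "M \<in> Units (ring_mat TYPE(complex) (Suc d) undefined)"
    using det_non_zero_imp_unit[OF Mc] det by simp
  then obtain B where Bc: "B \<in> carrier_mat (Suc d) (Suc d)" and BM: "B * M = 1\<^sub>m (Suc d)"
    and MB: "M * B = 1\<^sub>m (Suc d)"
    by (auto simp: Units_def ring_mat_def)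
  have inv: "B *\<^sub>v (M *\<^sub>v x) = x" if "x \<in> carrier_vec (Suc d)" for x
    using that Bc Mc BM by (simp flip: assoc_mult_mat_vec)
  have "det B = 1" using det_mult[OF Bc Mc] BM det by simp
  moreover have "lbeta d (B *\<^sub>v x) (B *\<^sub>v y) = lbeta d x y"
    if "x \<in> carrier_vec (Suc d)" "y \<in> carrier_vec (Suc d)" for x y
    using isometriesD(2)[OF M, of "B *\<^sub>v x" "B *\<^sub>v y"] that Bc Mc MB
    by (simp flip: assoc_mult_mat_vec)
  ultimately have "B \<in> G_C d" using Bc by (simp add: G_C_def)
  then show ?thesis using inv that by blast
qed

definition reflection :: "nat \<Rightarrow> complex vec \<Rightarrow> complex mat" where
  "reflection d v = mat (Suc d) (Suc d)
     (\<lambda>(i, j). (if i = j then 1 else 0) - 2 * v $ i * (lorentz_sign j * v $ j) / lbeta d v v)"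

lemma reflection_mult_vec:
  assumes v: "v \<in> carrier_vec (Suc d)" and x: "x \<in> carrier_vec (Suc d)"
  shows "reflection d v *\<^sub>v x = x - (2 * lbeta d v x / lbeta d v v) \<cdot>\<^sub>v v"
proof (rule eq_vecI)
  fix i assume "i < dim_vec (x - (2 * lbeta d v x / lbeta d v v) \<cdot>\<^sub>v v)"
  then have i: "i < Suc d" using v by simp
  have "(reflection d v *\<^sub>v x) $ i
      = (\<Sum>j<Suc d. (if i = j then x $ j else 0) - 2 * v $ i / lbeta d v v * (lorentz_sign j * (v $ j * x $ j)))"
    using i x by (auto simp: reflection_def scalar_prod_def atLeast0LessThan algebra_simps intro!: sum.cong)
  also have "\<dots> = x $ i - 2 * v $ i / lbeta d v v * lbeta d v x"
    using i by (simp add: sum_subtractf lbeta_conv_sum del: sum.lessThan_Suc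
        flip: sum_distrib_left sum_divide_distrib)
  finally show "(reflection d v *\<^sub>v x) $ i = (x - (2 * lbeta d v x / lbeta d v v) \<cdot>\<^sub>v v) $ i"
    using i v x by simp
qed (use v in \<open>simp add: reflection_def\<close>)

lemma reflection_isometry:
  assumes v: "v \<in> carrier_vec (Suc d)" and nz: "lbeta d v v \<noteq> 0"
  shows "reflection d v \<in> isometries d"
  unfolding isometries_def
proof (intro CollectI conjI ballI)
  show "reflection d v \<in> carrier_mat (Suc d) (Suc d)" by (simp add: reflection_def)
  fix x y :: "complex vec" assume x: "x \<in> carrier_vec (Suc d)" and y: "y \<in> carrier_vec (Suc d)"
  define a b where "a = 2 * lbeta d v x / lbeta d v v" and "b = 2 * lbeta d v y / lbeta d v v"
  have "lbeta d (reflection d v *\<^sub>v x) (reflection d v *\<^sub>v y) = lbeta d (x - a \<cdot>\<^sub>v v) (y - b \<cdot>\<^sub>v v)"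
    using v x y by (simp add: reflection_mult_vec a_def b_def)
  also have "\<dots> = lbeta d x y - b * lbeta d x v - a * lbeta d v y + a * b * lbeta d v v"
    using v x y by (simp add: lbeta_diff_left lbeta_diff_right lbeta_smult_left lbeta_smult_right algebra_simps)
  also have "\<dots> = lbeta d x y"
    using nz by (simp add: a_def b_def lbeta_sym[of d x v] field_simps)
  finally show "lbeta d (reflection d v *\<^sub>v x) (reflection d v *\<^sub>v y) = lbeta d x y" .
qed

lemma reflection_fixes:
  assumes "v \<in> carrier_vec (Suc d)" "x \<in> carrier_vec (Suc d)" "lbeta d v x = 0"
  shows "reflection d v *\<^sub>v x = x"
  using assms by (simp add: reflection_mult_vec) (intro eq_vecI; simp)

lemma reflection_swaps:
  assumes a: "a \<in> carrier_vec (Suc d)" and b: "b \<in> carrier_vec (Suc d)"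
    and eq: "lbeta d a a = lbeta d b b" and nz: "lbeta d (a - b) (a - b) \<noteq> 0"
  shows "reflection d (a - b) *\<^sub>v a = b"
proof -
  have "lbeta d (a - b) (a - b) = 2 * lbeta d (a - b) a"
    using a b eq by (simp add: lbeta_diff_self lbeta_diff_left lbeta_diff_right lbeta_sym[of d b a])
  then have "2 * lbeta d (a - b) a / lbeta d (a - b) (a - b) = 1" using nz by simp
  then show ?thesis using a b by (simp add: reflection_mult_vec) (intro eq_vecI; simp)
qed

lemma isometry_transitive_on_sphere:
  assumes a: "a \<in> carrier_vec (Suc d)" and b: "b \<in> carrier_vec (Suc d)"
    and eq: "lbeta d a a = lbeta d b b" and nz: "lbeta d a a \<noteq> 0"
  obtains h where "h \<in> isometries d" "h *\<^sub>v a = b"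
    "\<And>x. x \<in> carrier_vec (Suc d) \<Longrightarrow> lbeta d a x = 0 \<Longrightarrow> lbeta d b x = 0 \<Longrightarrow> h *\<^sub>v x = x"
proof (cases "lbeta d (a - b) (a - b) = 0")
  case False
  show ?thesis
  proof (rule that)
    show "reflection d (a - b) \<in> isometries d" using a b False by (simp add: reflection_isometry)
    show "reflection d (a - b) *\<^sub>v a = b" using a b eq False by (rule reflection_swaps)
    show "reflection d (a - b) *\<^sub>v x = x"
      if "x \<in> carrier_vec (Suc d)" "lbeta d a x = 0" "lbeta d b x = 0" for x
      using a b that by (simp add: reflection_fixes lbeta_diff_left)
  qed
next
  case True
  \<comment> \<open>\<open>a - b\<close> is null: pass through \<open>c = -b\<close>; the vectors \<open>a - c = a + b\<close> and \<open>c - b = -2b\<close> are not\<close>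
  define c where "c = (-1) \<cdot>\<^sub>v b"
  have c: "c \<in> carrier_vec (Suc d)" using b by (simp add: c_def)
  have ab: "lbeta d a b = lbeta d a a"
    using True a b eq by (simp add: lbeta_diff_self)
  have ac: "lbeta d (a - c) (a - c) = 4 * lbeta d a a" and cb: "lbeta d (c - b) (c - b) = 4 * lbeta d a a"
    using a b c ab eq by (simp_all add: lbeta_diff_self c_def lbeta_smult_left lbeta_smult_right lbeta_sym[of d b a])
  have cc: "lbeta d c c = lbeta d b b"
    using b by (simp add: c_def lbeta_smult_left lbeta_smult_right)
  have R1: "reflection d (a - c) \<in> isometries d" and R2: "reflection d (c - b) \<in> isometries d"
    using a b c ac cb nz by (simp_all add: reflection_isometry)
  show ?thesis
  proof (rule that)
    show "reflection d (c - b) * reflection d (a - c) \<in> isometries d" using R2 R1 by (rule isometries_mult)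
    have "reflection d (a - c) *\<^sub>v a = c" using a c eq cc ac nz by (intro reflection_swaps) auto
    moreover have "reflection d (c - b) *\<^sub>v c = b" using b c cc cb nz by (intro reflection_swaps) auto
    ultimately show "(reflection d (c - b) * reflection d (a - c)) *\<^sub>v a = b"
      using a isometriesD(1)[OF R1] isometriesD(1)[OF R2] by (simp add: assoc_mult_mat_vec)
    fix x assume x: "x \<in> carrier_vec (Suc d)" and "lbeta d a x = 0" "lbeta d b x = 0"
    then have "lbeta d (a - c) x = 0" "lbeta d (c - b) x = 0"
      using a b c by (simp_all add: lbeta_diff_left c_def lbeta_smult_left)
    then show "(reflection d (c - b) * reflection d (a - c)) *\<^sub>v x = x"
      using a b c x isometriesD(1)[OF R1] isometriesD(1)[OF R2]
      by (simp add: assoc_mult_mat_vec reflection_fixes)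
  qed
qed

text \<open>Witt's theorem for a pair spanning a nondegenerate plane: after moving \<open>z\<close> to \<open>z'\<close>, the
  components of the two \<open>w\<close>'s orthogonal to \<open>z'\<close> have the same nonzero square.\<close>

lemma isometry_pair_transitive:
  assumes z: "z \<in> carrier_vec (Suc d)" and w: "w \<in> carrier_vec (Suc d)"
    and z': "z' \<in> carrier_vec (Suc d)" and w': "w' \<in> carrier_vec (Suc d)"
    and zz: "lbeta d z z = lbeta d z' z'" and ww: "lbeta d w w = lbeta d w' w'"
    and zw: "lbeta d z w = lbeta d z' w'"
    and nz: "lbeta d z z \<noteq> 0" and gram: "lbeta d z z * lbeta d w w \<noteq> (lbeta d z w)\<^sup>2"
  obtains h where "h \<in> isometries d" "h *\<^sub>v z = z'" "h *\<^sub>v w = w'"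
proof -
  obtain h1 where h1: "h1 \<in> isometries d" and h1z: "h1 *\<^sub>v z = z'"
    using isometry_transitive_on_sphere[OF z z' zz nz] by blast
  have h1c: "h1 \<in> carrier_mat (Suc d) (Suc d)" using h1 by (rule isometriesD)
  define w1 where "w1 = h1 *\<^sub>v w"
  have w1: "w1 \<in> carrier_vec (Suc d)" using h1c w by (simp add: w1_def)
  have w1w1: "lbeta d w1 w1 = lbeta d w' w'" and z'w1: "lbeta d z' w1 = lbeta d z' w'"
    using isometriesD(2)[OF h1] z w ww zw by (simp_all add: w1_def flip: h1z)
  define k where "k = lbeta d z w / lbeta d z z"
  define v v' where "v = w1 - k \<cdot>\<^sub>v z'" and "v' = w' - k \<cdot>\<^sub>v z'"
  have v: "v \<in> carrier_vec (Suc d)" and v': "v' \<in> carrier_vec (Suc d)"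
    using w1 w' z' by (simp_all add: v_def v'_def)
  have expand: "lbeta d (x - k \<cdot>\<^sub>v z') (x - k \<cdot>\<^sub>v z')
      = lbeta d x x - 2 * k * lbeta d z' x + k * k * lbeta d z' z'"
    "lbeta d (x - k \<cdot>\<^sub>v z') z' = lbeta d z' x - k * lbeta d z' z'"
    if "x \<in> carrier_vec (Suc d)" for x
    using that z' by (simp_all add: lbeta_diff_left lbeta_diff_right lbeta_smult_left lbeta_smult_right
        lbeta_sym[of d x z'] algebra_simps)
  have vv: "lbeta d v v = lbeta d v' v'" and vz': "lbeta d v z' = 0" "lbeta d v' z' = 0"
    using expand[OF w1] expand[OF w'] w1w1 z'w1 zz zw nz by (simp_all add: v_def v'_def k_def)
  have "lbeta d v v = lbeta d w w - (lbeta d z w)\<^sup>2 / lbeta d z z"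
    using expand(1)[OF w1] w1w1 z'w1 ww zz zw nz by (simp add: v_def k_def power2_eq_square field_simps)
  then have "lbeta d v v \<noteq> 0"
    using gram nz by (auto simp: field_simps)
  then obtain h2 where h2: "h2 \<in> isometries d" and h2v: "h2 *\<^sub>v v = v'"
    and h2z': "h2 *\<^sub>v z' = z'"
    using isometry_transitive_on_sphere[OF v v' vv] z' vz' by (metis lbeta_sym)
  have h2c: "h2 \<in> carrier_mat (Suc d) (Suc d)" using h2 by (rule isometriesD)
  have "w1 = v + k \<cdot>\<^sub>v z'" and "w' = v' + k \<cdot>\<^sub>v z'"
    using w1 w' z' by (auto simp: v_def v'_def intro!: eq_vecI)
  then have "h2 *\<^sub>v w1 = w'"
    using h2c v z' h2v h2z' by (simp add: mult_add_distrib_mat_vec mult_mat_vec)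
  then show ?thesis
    using that[of "h2 * h1"] isometries_mult[OF h2 h1] h1c h2c z w h1z h2z'
    by (simp add: assoc_mult_mat_vec w1_def)
qed

lemma lbeta_timelike_spatial_bound:
  fixes x y :: "real vec"
  assumes "lbeta d x x > 0" "lbeta d y y > 0"
  shows "(\<Sum>i\<in>{1..d}. x $ i * y $ i)\<^sup>2 < (x $ 0 * y $ 0)\<^sup>2"
proof -
  define X Y where "X = (\<Sum>i\<in>{1..d}. (x $ i)\<^sup>2)" and "Y = (\<Sum>i\<in>{1..d}. (y $ i)\<^sup>2)"
  have "X < (x $ 0)\<^sup>2" "Y < (y $ 0)\<^sup>2"
    using assms by (simp_all add: lbeta_def X_def Y_def power2_eq_square)
  moreover have "0 \<le> X" "0 \<le> Y" by (simp_all add: X_def Y_def sum_nonneg)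
  ultimately have "X * Y < (x $ 0)\<^sup>2 * (y $ 0)\<^sup>2" by (intro mult_strict_mono') auto
  moreover have "(\<Sum>i\<in>{1..d}. x $ i * y $ i)\<^sup>2 \<le> X * Y"
    unfolding X_def Y_def by (rule Cauchy_Schwarz_ineq_sum)
  ultimately show ?thesis by (simp add: power_mult_distrib)
qed

lemma lbeta_orthogonal_timelike_nonpos:
  fixes x y :: "real vec"
  assumes "lbeta d x y = 0" "lbeta d y y > 0"
  shows "lbeta d x x \<le> 0"
  using lbeta_timelike_spatial_bound[of d x y] assms by (force simp: lbeta_def)

lemma Vplus_lbeta_pos:
  assumes x: "x \<in> Vplus d" and y: "y \<in> Vplus d"
  shows "lbeta d x y > 0"
proof -
  have "0 < x $ 0 * y $ 0" using x y by (simp add: Vplus_def)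
  moreover have "(\<Sum>i\<in>{1..d}. x $ i * y $ i)\<^sup>2 < (x $ 0 * y $ 0)\<^sup>2"
    using x y by (intro lbeta_timelike_spatial_bound) (simp_all add: Vplus_def)
  ultimately show ?thesis by (auto simp: lbeta_def dest: power2_less_imp_less)
qed

lemma Vplus_add:
  assumes x: "x \<in> Vplus d" and y: "y \<in> Vplus d"
  shows "x + y \<in> Vplus d"
proof -
  have xc: "x \<in> carrier_vec (Suc d)" and yc: "y \<in> carrier_vec (Suc d)"
    using x y by (simp_all add: Vplus_def)
  have "lbeta d (x + y) (x + y) = lbeta d x x + 2 * lbeta d x y + lbeta d y y"
    using xc yc by (simp add: lbeta_add_left lbeta_add_right lbeta_sym[of d y x])
  then have "lbeta d (x + y) (x + y) > 0"
    using Vplus_lbeta_pos[OF x y] x y by (simp add: Vplus_def)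
  then show ?thesis using x y xc yc by (simp add: Vplus_def)
qed

lemma dim_cconj_vec [simp]: "dim_vec (cconj_vec x) = dim_vec x"
  by (simp add: cconj_vec_def)

lemma cconj_vec_carrier [simp]: "cconj_vec x \<in> carrier_vec n \<longleftrightarrow> x \<in> carrier_vec n"
  by (simp add: cconj_vec_def)

lemma cconj_vec_index [simp]: "i < dim_vec x \<Longrightarrow> cconj_vec x $ i = cnj (x $ i)"
  by (simp add: cconj_vec_def)

lemma cconj_vec_cconj_vec [simp]: "cconj_vec (cconj_vec x) = x"
  by (simp add: cconj_vec_def eq_vecI)

lemma lbeta_cconj_vec:
  assumes "x \<in> carrier_vec (Suc d)" "y \<in> carrier_vec (Suc d)"
  shows "lbeta d (cconj_vec x) (cconj_vec y) = cnj (lbeta d x y)"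
  using assms by (simp add: lbeta_def)

lemma cconj_vec_dS_C: "z \<in> dS_C d \<Longrightarrow> cconj_vec z \<in> dS_C d"
  by (simp add: dS_C_def lbeta_cconj_vec)

lemma cconj_mat_mult_vec:
  assumes g: "g \<in> carrier_mat (Suc d) (Suc d)" and w: "w \<in> carrier_vec (Suc d)"
  shows "cconj_mat g *\<^sub>v w = cconj_vec (g *\<^sub>v cconj_vec w)"
  using assms by (intro eq_vecI) (auto simp: cconj_mat_def cconj_vec_def scalar_prod_def)

lemma lbeta_Re_Im:
  assumes "z \<in> carrier_vec (Suc d)"
  shows "Re (lbeta d z z) = lbeta d (map_vec Re z) (map_vec Re z) - lbeta d (map_vec Im z) (map_vec Im z)"
    and "Im (lbeta d z z) = 2 * lbeta d (map_vec Re z) (map_vec Im z)"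
  using assms by (simp_all add: lbeta_def algebra_simps sum_subtractf sum_distrib_left)

text \<open>If \<open>\<beta>(z, conj w) = r\<close> were real, \<open>\<zeta> = z - conj w\<close> would have real square \<open>-2 - 2r\<close> and timelike
  imaginary part \<open>Im z + Im w\<close>; its real part is orthogonal to a timelike vector, hence not timelike,
  which forces \<open>\<beta>(\<zeta>, \<zeta>) < 0\<close>, i.e. \<open>r > -1\<close>.\<close>

lemma Xi_plus_lbeta_cconj_notin:
  assumes z: "z \<in> Xi_plus d" and w: "w \<in> Xi_plus d"
  shows "lbeta d z (cconj_vec w) \<notin> complex_of_real ` {.. -1}"
proof
  assume "lbeta d z (cconj_vec w) \<in> complex_of_real ` {.. -1}"
  then obtain r where r: "r \<le> -1" and zw: "lbeta d z (cconj_vec w) = complex_of_real r" by auto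
  have zc: "z \<in> carrier_vec (Suc d)" and wc: "w \<in> carrier_vec (Suc d)"
    and zz: "lbeta d z z = -1" and ww: "lbeta d (cconj_vec w) (cconj_vec w) = -1"
    using z w by (simp_all add: Xi_plus_def dS_C_def lbeta_cconj_vec)
  define \<zeta> where "\<zeta> = z - cconj_vec w"
  have \<zeta>c: "\<zeta> \<in> carrier_vec (Suc d)" using zc wc by (simp add: \<zeta>_def)
  have \<zeta>\<zeta>: "lbeta d \<zeta> \<zeta> = complex_of_real (-2 - 2 * r)"
    using zc wc zz ww zw by (simp add: \<zeta>_def lbeta_diff_self)
  have "map_vec Im \<zeta> = map_vec Im z + map_vec Im w"
    using zc wc by (intro eq_vecI) (simp_all add: \<zeta>_def)
  then have timelike: "lbeta d (map_vec Im \<zeta>) (map_vec Im \<zeta>) > 0"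
    using Vplus_add z w by (simp add: Xi_plus_def Vplus_def)
  have "lbeta d (map_vec Re \<zeta>) (map_vec Im \<zeta>) = 0"
    using lbeta_Re_Im(2)[OF \<zeta>c] \<zeta>\<zeta> by simp
  then have "lbeta d (map_vec Re \<zeta>) (map_vec Re \<zeta>) \<le> 0"
    using timelike by (rule lbeta_orthogonal_timelike_nonpos)
  then show False
    using lbeta_Re_Im(1)[OF \<zeta>c] \<zeta>\<zeta> timelike r by simp
qed

definition lightcone_vec :: "nat \<Rightarrow> complex \<Rightarrow> complex \<Rightarrow> complex vec" where
  "lightcone_vec d W M = vec (Suc d) (\<lambda>k. if k = 0 then (W - M) / 2 else if k = 1 then (W + M) / 2 else 0)"

lemma lightcone_vec_carrier [simp]: "lightcone_vec d W M \<in> carrier_vec (Suc d)"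
  by (simp add: lightcone_vec_def)

lemma lbeta_lightcone_vec:
  assumes "d \<ge> 1"
  shows "lbeta d (lightcone_vec d W M) (lightcone_vec d W' M') = - (W * M' + M * W') / 2"
  using assms by (subst lbeta_plane) (auto simp: lightcone_vec_def field_simps)

lemma cconj_lightcone_vec: "cconj_vec (lightcone_vec d W M) = lightcone_vec d (cnj W) (cnj M)"
  by (intro eq_vecI) (auto simp: lightcone_vec_def)

lemma lightcone_vec_in_Xi_plus:
  assumes d: "d \<ge> 1" and WM: "W * M = 1" and W: "Im W > 0"
  shows "lightcone_vec d W M \<in> Xi_plus d"
proof -
  have "M = inverse W" using WM by (simp add: inverse_unique)
  then have M: "Im M < 0" using W by (simp add: divide_neg_pos add_nonneg_pos)
  define y where "y = map_vec Im (lightcone_vec d W M)"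
  have y: "y \<in> carrier_vec (Suc d)" "y $ 0 = (Im W - Im M) / 2" "y $ 1 = (Im W + Im M) / 2"
    "\<forall>k\<in>{2..d}. y $ k = 0"
    using d by (auto simp: y_def lightcone_vec_def)
  have "lbeta d y y = - (Im W * Im M)"
    unfolding lbeta_plane[OF d y(4)] y(2,3) by (simp add: field_simps)
  then have "y \<in> Vplus d" using y W M by (simp add: Vplus_def mult_pos_neg)
  moreover have "lbeta d (lightcone_vec d W M) (lightcone_vec d W M) = -1"
    using d WM by (simp add: lbeta_lightcone_vec mult.commute)
  ultimately show ?thesis by (simp add: Xi_plus_def dS_C_def y_def)
qed

text \<open>The roots of \<open>r + 1/r = -2c\<close> are positive reals only when \<open>c \<le> -1\<close>, and a complex number off
  the ray \<open>[0, \<infinity>)\<close> has a square root in the upper half-plane.\<close>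

lemma ex_upper_half_plane_root:
  assumes c: "c \<notin> complex_of_real ` {.. -1}"
  obtains s where "Im s > 0" "s\<^sup>2 + inverse (s\<^sup>2) = - 2 * c"
proof -
  define q where "q = csqrt (c\<^sup>2 - 1)"
  define r where "r = - c + q"
  have "r * (- c - q) = c\<^sup>2 - q\<^sup>2" by (simp add: r_def power2_eq_square algebra_simps)
  then have prod: "r * (- c - q) = 1" by (simp add: q_def)
  then have sum_inv: "r + inverse r = - 2 * c" by (simp add: r_def inverse_unique)
  have r_pos_real: False if "r = complex_of_real x" "x \<ge> 0" for x
  proof -
    have "x \<noteq> 0" using prod that by auto
    then have "2 \<le> x + inverse x" using \<open>x \<ge> 0\<close> sum_squares_ge_zero[of "x - 1" 0]
      by (simp add: field_simps power2_eq_square)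
    have "c = - (r + inverse r) / 2" using sum_inv by simp
    also have "\<dots> = complex_of_real (- (x + inverse x) / 2)" using that(1) by simp
    finally have "c \<in> complex_of_real ` {.. -1}"
      using \<open>2 \<le> x + inverse x\<close> by (intro image_eqI[of _ _ "- (x + inverse x) / 2"]) auto
    then show False using c by contradiction
  qed
  define s0 where "s0 = csqrt r"
  have "Im s0 \<noteq> 0"
  proof
    assume "Im s0 = 0"
    then have "r = complex_of_real ((Re s0)\<^sup>2)"
      by (metis s0_def complex_is_Real_iff of_real_Re of_real_power power2_csqrt)
    then show False using r_pos_real[of "(Re s0)\<^sup>2"] by simp
  qed
  define s where "s = (if Im s0 > 0 then s0 else - s0)"
  have "Im s > 0" using \<open>Im s0 \<noteq> 0\<close> by (simp add: s_def)
  moreover have "s\<^sup>2 = r" by (simp add: s_def s0_def)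
  ultimately show ?thesis using that sum_inv by simp
qed

lemma ex_isometry_into_Xi_plus_nondegenerate:
  assumes d: "d \<ge> 1" and z: "z \<in> dS_C d" and w: "w \<in> dS_C d"
    and c: "lbeta d z w \<notin> complex_of_real ` {.. -1}" and c1: "lbeta d z w \<noteq> 1"
  obtains h where "h \<in> isometries d" "h *\<^sub>v z \<in> Xi_plus d" "cconj_vec (h *\<^sub>v w) \<in> Xi_plus d"
proof -
  obtain s where s: "Im s > 0" "s\<^sup>2 + inverse (s\<^sup>2) = - 2 * lbeta d z w"
    using ex_upper_half_plane_root[OF c] .
  have s0: "s \<noteq> 0" using s by auto
  define z' w' where "z' = lightcone_vec d s (inverse s)" and "w' = lightcone_vec d (inverse s) s"
  have "lbeta d z w \<noteq> -1" using c by force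
  then have gram: "lbeta d z z * lbeta d w w \<noteq> (lbeta d z w)\<^sup>2"
    using z w c1 by (auto simp: dS_C_def power2_eq_1_iff)
  obtain h where h: "h \<in> isometries d" "h *\<^sub>v z = z'" "h *\<^sub>v w = w'"
  proof (rule isometry_pair_transitive[of z d w z' w'])
    show "lbeta d z w = lbeta d z' w'"
      using d s by (simp add: z'_def w'_def lbeta_lightcone_vec power2_eq_square power_inverse
          field_simps)
  qed (use z w d s0 gram in \<open>auto simp: z'_def w'_def dS_C_def lbeta_lightcone_vec\<close>)
  have "z' \<in> Xi_plus d" using d s s0 by (simp add: z'_def lightcone_vec_in_Xi_plus)
  moreover have "cconj_vec w' \<in> Xi_plus d"
  proof -
    have "0 < (Re s)\<^sup>2 + (Im s)\<^sup>2" using s(1) by (simp add: add_nonneg_pos)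
    then have "Im (inverse (cnj s)) > 0" using s(1) by simp
    moreover have "inverse (cnj s) * cnj s = 1" using s0 by simp
    ultimately show ?thesis
      using d by (simp add: w'_def cconj_lightcone_vec lightcone_vec_in_Xi_plus)
  qed
  ultimately show ?thesis using that h by simp
qed

lemma dS_C_in_Xi_plus_of_small_Im:
  assumes y: "y \<in> dS_C d" and y0: "y $ 0 = \<i>" and small: "(\<Sum>k\<in>{1..d}. (Im (y $ k))\<^sup>2) < 1"
  shows "y \<in> Xi_plus d"
proof -
  have yc: "y \<in> carrier_vec (Suc d)" using y by (simp add: dS_C_def)
  have "lbeta d (map_vec Im y) (map_vec Im y) = 1 - (\<Sum>k\<in>{1..d}. (Im (y $ k))\<^sup>2)"
    using yc y0 by (simp add: lbeta_def power2_eq_square)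
  then show ?thesis using y yc y0 small by (simp add: Xi_plus_def Vplus_def)
qed

text \<open>A null vector \<open>v\<close> orthogonal to \<open>e\<^sub>0\<close> is moved to \<open>t conj v\<close> by the reflection in \<open>v - t conj v\<close>,
  which is non-null since \<open>\<beta>(v, conj v) = -\<Sum>\<^sub>k |v\<^sub>k|\<^sup>2\<close>.\<close>

lemma ex_isometry_scale_conj_spatial_part:
  assumes w: "w \<in> carrier_vec (Suc d)" "lbeta d w w = -1" "w $ 0 = - \<i>" and t: "t > 0"
  obtains R where "R \<in> isometries d"
    "R *\<^sub>v w = vec (Suc d) (\<lambda>k. if k = 0 then - \<i> else complex_of_real t * cnj (w $ k))"
    "\<And>x. x \<in> carrier_vec (Suc d) \<Longrightarrow> \<forall>k\<in>{1..d}. x $ k = 0 \<Longrightarrow> R *\<^sub>v x = x"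
proof -
  define w' where "w' = vec (Suc d) (\<lambda>k. if k = 0 then - \<i> else complex_of_real t * cnj (w $ k))"
  have w'c: "w' \<in> carrier_vec (Suc d)" by (simp add: w'_def)
  have "(\<Sum>k\<in>{1..d}. w $ k * w $ k) = 0" using w by (simp add: lbeta_def)
  moreover have "(\<Sum>k\<in>{1..d}. w' $ k * w' $ k) = complex_of_real (t * t) * cnj (\<Sum>k\<in>{1..d}. w $ k * w $ k)"
    by (simp add: w'_def sum_distrib_left mult_ac)
  ultimately have w'w': "lbeta d w' w' = -1" by (simp add: lbeta_def w'_def)
  show ?thesis
  proof (cases "\<forall>k\<in>{1..d}. w $ k = 0")
    case True
    then have "w = w'" using w by (intro eq_vecI) (auto simp: w'_def)
    then show ?thesis using that[of "1\<^sub>m (Suc d)"] one_mat_isometries w by (simp add: w'_def)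
  next
    case False
    define N where "N = (\<Sum>k\<in>{1..d}. w $ k * cnj (w $ k))"
    have "N = complex_of_real (\<Sum>k\<in>{1..d}. (Re (w $ k))\<^sup>2 + (Im (w $ k))\<^sup>2)"
      by (simp add: N_def complex_mult_cnj)
    moreover obtain k where "k \<in> {1..d}" "w $ k \<noteq> 0" using False by blast
    then have "(\<Sum>k\<in>{1..d}. (Re (w $ k))\<^sup>2 + (Im (w $ k))\<^sup>2) > 0"
      by (intro sum_pos2[of _ k]) (auto simp: complex_neq_0[symmetric])
    ultimately have N: "N \<noteq> 0" by (metis less_irrefl of_real_eq_0_iff)
    have "lbeta d w w' = -1 - t * N" using w by (simp add: lbeta_def w'_def N_def sum_distrib_left mult_ac)
    then have nz: "lbeta d (w - w') (w - w') \<noteq> 0"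
      using w w'c w'w' t N by (simp add: lbeta_diff_self)
    show ?thesis
    proof (rule that[folded w'_def])
      show "reflection d (w - w') \<in> isometries d" using w w'c nz by (simp add: reflection_isometry)
      show "reflection d (w - w') *\<^sub>v w = w'" using w w'c w'w' nz by (intro reflection_swaps) auto
      show "reflection d (w - w') *\<^sub>v x = x"
        if "x \<in> carrier_vec (Suc d)" "\<forall>k\<in>{1..d}. x $ k = 0" for x
        using w w'c that by (intro reflection_fixes) (auto simp: lbeta_def w'_def)
    qed
  qed
qed

text \<open>If \<open>\<beta>(z, w) = 1\<close>, the plane spanned by \<open>z, w\<close> is degenerate and Witt's theorem does not apply.
  Moving \<open>z\<close> to \<open>p = i e\<^sub>0\<close> makes \<open>w = -p + v\<close> with \<open>v\<close> null and orthogonal to \<open>e\<^sub>0\<close>; replacing \<open>v\<close>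
  by \<open>t conj v\<close> with \<open>t > 0\<close> small puts \<open>conj w = p + t v\<close> into \<open>\<Xi>\<^sub>+\<close>.\<close>

lemma ex_isometry_into_Xi_plus_null:
  assumes d: "d \<ge> 1" and z: "z \<in> dS_C d" and w: "w \<in> dS_C d" and c: "lbeta d z w = 1"
  obtains h where "h \<in> isometries d" "h *\<^sub>v z \<in> Xi_plus d" "cconj_vec (h *\<^sub>v w) \<in> Xi_plus d"
proof -
  define p where "p = lightcone_vec d \<i> (- \<i>)"
  have p: "p \<in> Xi_plus d" using d by (simp add: p_def lightcone_vec_in_Xi_plus)
  then have pc: "p \<in> carrier_vec (Suc d)" and pp: "lbeta d p p = -1"
    by (simp_all add: Xi_plus_def dS_C_def)
  have p_spatial: "\<forall>k\<in>{1..d}. p $ k = 0" by (simp add: p_def lightcone_vec_def)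
  have zc: "z \<in> carrier_vec (Suc d)" and wc: "w \<in> carrier_vec (Suc d)" and zz: "lbeta d z z = -1"
    using z w by (simp_all add: dS_C_def)
  then obtain h1 where h1: "h1 \<in> isometries d" and h1z: "h1 *\<^sub>v z = p"
    using isometry_transitive_on_sphere[OF zc pc] pp by auto
  have h1c: "h1 \<in> carrier_mat (Suc d) (Suc d)" using h1 by (rule isometriesD)
  define w1 where "w1 = h1 *\<^sub>v w"
  have w1c: "w1 \<in> carrier_vec (Suc d)" and w1w1: "lbeta d w1 w1 = -1"
    using isometriesD(2)[OF h1 wc wc] h1c wc w by (simp_all add: w1_def dS_C_def)
  have "lbeta d w1 p = lbeta d w z" using isometriesD(2)[OF h1 wc zc] by (simp add: w1_def h1z)
  then have "\<i> * w1 $ 0 = 1"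
    using c d by (simp add: lbeta_sym[of d w] lbeta_plane p_def lightcone_vec_def mult.commute)
  then have w10: "w1 $ 0 = - \<i>" by (metis inverse_i inverse_unique)
  define S where "S = (\<Sum>k\<in>{1..d}. (Im (w1 $ k))\<^sup>2)"
  define t where "t = 1 / (1 + S)"
  have S: "S \<ge> 0" by (simp add: S_def sum_nonneg)
  then have t: "t > 0" by (simp add: t_def)
  have "S < (1 + S)\<^sup>2" using S by (simp add: power2_eq_square algebra_simps add_pos_nonneg)
  then have small: "t\<^sup>2 * S < 1" using S by (simp add: t_def power_divide)
  obtain R where R: "R \<in> isometries d" and Rp: "R *\<^sub>v p = p"
    and Rw1: "R *\<^sub>v w1 = vec (Suc d) (\<lambda>k. if k = 0 then - \<i> else complex_of_real t * cnj (w1 $ k))"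
    using ex_isometry_scale_conj_spatial_part[OF w1c w1w1 w10 t] pc p_spatial by metis
  have Rc: "R \<in> carrier_mat (Suc d) (Suc d)" using R by (rule isometriesD)
  have hz: "(R * h1) *\<^sub>v z = p" and hw: "(R * h1) *\<^sub>v w = R *\<^sub>v w1"
    using Rc h1c zc wc Rp h1z by (simp_all add: assoc_mult_mat_vec w1_def)
  have "R *\<^sub>v w1 \<in> dS_C d"
    using isometriesD(2)[OF R w1c w1c] w1w1 Rc w1c by (simp add: dS_C_def)
  moreover have "(\<Sum>k\<in>{1..d}. (Im (cconj_vec (R *\<^sub>v w1) $ k))\<^sup>2) = t\<^sup>2 * S"
    by (simp add: Rw1 S_def sum_distrib_left power_mult_distrib)
  ultimately have "cconj_vec (R *\<^sub>v w1) \<in> Xi_plus d"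
    using small by (intro dS_C_in_Xi_plus_of_small_Im) (simp_all add: cconj_vec_dS_C Rw1)
  then show ?thesis using that isometries_mult[OF R h1] hz hw p by simp
qed

definition space_flip :: "nat \<Rightarrow> 'a::comm_ring_1 mat" where
  "space_flip d = mat_diag (Suc d) (\<lambda>k. if k = 1 then -1 else 1)"

lemma space_flip_carrier [simp]: "space_flip d \<in> carrier_mat (Suc d) (Suc d)"
  by (simp add: space_flip_def)

lemma space_flip_mult_vec:
  "x \<in> carrier_vec (Suc d) \<Longrightarrow> space_flip d *\<^sub>v x = vec (Suc d) (\<lambda>k. if k = 1 then - x $ k else x $ k)"
  by (intro eq_vecI) (simp_all add: space_flip_def mat_diag_mult_vec)

lemma lbeta_space_flip:
  assumes "x \<in> carrier_vec (Suc d)" "y \<in> carrier_vec (Suc d)"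
  shows "lbeta d (space_flip d *\<^sub>v x) (space_flip d *\<^sub>v y) = lbeta d x y"
  unfolding lbeta_conv_sum using assms by (intro sum.cong) (auto simp: space_flip_mult_vec)

lemma space_flip_isometry: "space_flip d \<in> isometries d"
  by (simp add: isometries_def lbeta_space_flip)

lemma det_space_flip: "d \<ge> 1 \<Longrightarrow> det (space_flip d) = -1"
  by (simp add: space_flip_def det_mat_diag)

lemma space_flip_Xi_plus:
  assumes z: "z \<in> Xi_plus d"
  shows "space_flip d *\<^sub>v z \<in> Xi_plus d"
proof -
  have zc: "z \<in> carrier_vec (Suc d)" using z by (simp add: Xi_plus_def dS_C_def)
  have Im: "map_vec Im (space_flip d *\<^sub>v z) = space_flip d *\<^sub>v map_vec Im z"
    using zc by (intro eq_vecI) (simp_all add: space_flip_mult_vec)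
  have "(space_flip d *\<^sub>v map_vec Im z) $ 0 = map_vec Im z $ 0"
    using zc by (simp add: space_flip_mult_vec)
  then show ?thesis
    using z zc lbeta_space_flip[OF zc zc] lbeta_space_flip[of "map_vec Im z" d "map_vec Im z"]
      mult_mat_vec_carrier[OF space_flip_carrier zc]
    by (simp add: Im Xi_plus_def dS_C_def Vplus_def)
qed

lemma cconj_space_flip:
  "x \<in> carrier_vec (Suc d) \<Longrightarrow> cconj_vec (space_flip d *\<^sub>v x) = space_flip d *\<^sub>v cconj_vec x"
  by (intro eq_vecI) (simp_all add: space_flip_mult_vec)

lemma ex_special_isometry_into_Xi_plus:
  assumes d: "d \<ge> 1" and z: "z \<in> dS_C d" and w: "w \<in> dS_C d"
    and c: "lbeta d z w \<notin> complex_of_real ` {.. -1}"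
  obtains h where "h \<in> isometries d" "det h = 1" "h *\<^sub>v z \<in> Xi_plus d" "cconj_vec (h *\<^sub>v w) \<in> Xi_plus d"
proof -
  obtain h where h: "h \<in> isometries d" and hz: "h *\<^sub>v z \<in> Xi_plus d"
    and hw: "cconj_vec (h *\<^sub>v w) \<in> Xi_plus d"
  proof (cases "lbeta d z w = 1")
    case True
    then show ?thesis using ex_isometry_into_Xi_plus_null[OF d z w] that by blast
  next
    case False
    then show ?thesis using ex_isometry_into_Xi_plus_nondegenerate[OF d z w c] that by blast
  qed
  have hc: "h \<in> carrier_mat (Suc d) (Suc d)" using h by (rule isometriesD)
  have zc: "z \<in> carrier_vec (Suc d)" and wc: "w \<in> carrier_vec (Suc d)"
    using z w by (simp_all add: dS_C_def)
  consider "det h = 1" | "det h = -1" using det_isometry[OF h] by blast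
  then show ?thesis
  proof cases
    case 1
    then show ?thesis using that h hz hw by blast
  next
    case 2
    let ?F = "space_flip d"
    have Fc: "?F \<in> carrier_mat (Suc d) (Suc d)" by simp
    show ?thesis
    proof (rule that)
      show "?F * h \<in> isometries d" using space_flip_isometry h by (rule isometries_mult)
      show "det (?F * h) = 1" using 2 d by (simp add: det_mult[OF Fc hc] det_space_flip)
      show "(?F * h) *\<^sub>v z \<in> Xi_plus d"
        using space_flip_Xi_plus[OF hz] by (simp add: assoc_mult_mat_vec[OF Fc hc zc])
      show "cconj_vec ((?F * h) *\<^sub>v w) \<in> Xi_plus d"
        using space_flip_Xi_plus[OF hw] hc wc
        by (simp add: assoc_mult_mat_vec[OF Fc hc wc] cconj_space_flip)
    qed
  qed
qed

lemma isometry_dS_C: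
  assumes h: "h \<in> isometries d" and z: "z \<in> dS_C d"
  shows "h *\<^sub>v z \<in> dS_C d"
proof -
  have "z \<in> carrier_vec (Suc d)" using z by (simp add: dS_C_def)
  then show ?thesis using isometriesD[OF h] z by (simp add: dS_C_def)
qed

lemma G_C_orbit_in_dS_C:
  assumes g: "g \<in> G_C d" and z: "z \<in> Xi_plus d" and w: "w \<in> Xi_plus d"
  shows "g *\<^sub>v z \<in> dS_C d" "cconj_mat g *\<^sub>v w \<in> dS_C d"
    "lbeta d (g *\<^sub>v z) (cconj_vec (cconj_mat g *\<^sub>v w)) \<notin> complex_of_real ` {.. -1}"
proof -
  have h: "g \<in> isometries d" using g by (simp add: G_C_eq)
  have gc: "g \<in> carrier_mat (Suc d) (Suc d)" using h by (rule isometriesD)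
  have zd: "z \<in> dS_C d" and wd: "w \<in> dS_C d" using z w by (simp_all add: Xi_plus_def)
  then have wc: "w \<in> carrier_vec (Suc d)" and zc: "z \<in> carrier_vec (Suc d)" by (simp_all add: dS_C_def)
  have gw: "cconj_mat g *\<^sub>v w = cconj_vec (g *\<^sub>v cconj_vec w)" using gc wc by (rule cconj_mat_mult_vec)
  show "g *\<^sub>v z \<in> dS_C d" using h zd by (rule isometry_dS_C)
  show "cconj_mat g *\<^sub>v w \<in> dS_C d" using gw h wd by (simp add: isometry_dS_C cconj_vec_dS_C)
  show "lbeta d (g *\<^sub>v z) (cconj_vec (cconj_mat g *\<^sub>v w)) \<notin> complex_of_real ` {.. -1}"
    using gw isometriesD(2)[OF h zc] wc Xi_plus_lbeta_cconj_notin[OF z w] by simp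
qed

lemma dS_C_pair_in_G_C_orbit:
  assumes d: "d \<ge> 1" and z: "z \<in> dS_C d" and w: "w \<in> dS_C d"
    and c: "lbeta d z (cconj_vec w) \<notin> complex_of_real ` {.. -1}"
  obtains g z0 w0 where "g \<in> G_C d" "z0 \<in> Xi_plus d" "w0 \<in> Xi_plus d"
    "z = g *\<^sub>v z0" "w = cconj_mat g *\<^sub>v w0"
proof -
  obtain h where h: "h \<in> isometries d" "det h = 1" and hz: "h *\<^sub>v z \<in> Xi_plus d"
    and hw: "cconj_vec (h *\<^sub>v cconj_vec w) \<in> Xi_plus d"
    using ex_special_isometry_into_Xi_plus[OF d z cconj_vec_dS_C[OF w] c] by blast
  obtain g where g: "g \<in> G_C d" and gh: "\<And>x. x \<in> carrier_vec (Suc d) \<Longrightarrow> g *\<^sub>v (h *\<^sub>v x) = x"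
    using isometry_inverse_in_G_C[OF h] by blast
  have gc: "g \<in> carrier_mat (Suc d) (Suc d)" using g by (simp add: G_C_def)
  have hc: "h \<in> carrier_mat (Suc d) (Suc d)" using h by (simp add: isometriesD)
  have zc: "z \<in> carrier_vec (Suc d)" and wc: "w \<in> carrier_vec (Suc d)" using z w by (simp_all add: dS_C_def)
  have "cconj_mat g *\<^sub>v cconj_vec (h *\<^sub>v cconj_vec w) = w"
    using gc hc wc gh by (simp add: cconj_mat_mult_vec)
  then show ?thesis using that[OF g hz hw] gh zc by simp
qed

theorem mainTheorem4:
  fixes d :: nat
  assumes "d \<ge> 1"
  shows "{(g *\<^sub>v z, cconj_mat g *\<^sub>v w) | g z w. g \<in> G_C d \<and> z \<in> Xi_plus d \<and> w \<in> Xi_plus d}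
       = {(z, w). z \<in> dS_C d \<and> w \<in> dS_C d \<and>
            lbeta d z (cconj_vec w) \<notin> complex_of_real ` {.. -1}}"
proof (intro equalityI subsetI)
  fix x assume "x \<in> {(g *\<^sub>v z, cconj_mat g *\<^sub>v w) | g z w. g \<in> G_C d \<and> z \<in> Xi_plus d \<and> w \<in> Xi_plus d}"
  then obtain g z w where "x = (g *\<^sub>v z, cconj_mat g *\<^sub>v w)" "g \<in> G_C d" "z \<in> Xi_plus d" "w \<in> Xi_plus d"
    by blast
  then show "x \<in> {(z, w). z \<in> dS_C d \<and> w \<in> dS_C d \<and> lbeta d z (cconj_vec w) \<notin> complex_of_real ` {.. -1}}"
    using G_C_orbit_in_dS_C by simp
next
  fix x assume "x \<in> {(z, w). z \<in> dS_C d \<and> w \<in> dS_C d \<and> lbeta d z (cconj_vec w) \<notin> complex_of_real ` {.. -1}}"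
  then obtain z w where x: "x = (z, w)" and "z \<in> dS_C d" "w \<in> dS_C d"
    "lbeta d z (cconj_vec w) \<notin> complex_of_real ` {.. -1}" by blast
  then obtain g z0 w0 where "g \<in> G_C d" "z0 \<in> Xi_plus d" "w0 \<in> Xi_plus d"
    "z = g *\<^sub>v z0" "w = cconj_mat g *\<^sub>v w0"
    using dS_C_pair_in_G_C_orbit[OF assms] by blast
  then show "x \<in> {(g *\<^sub>v z, cconj_mat g *\<^sub>v w) | g z w. g \<in> G_C d \<and> z \<in> Xi_plus d \<and> w \<in> Xi_plus d}"
    using x by blast
qed

end
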